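(* Let $n$, $k$ and $r$ be positive integers. Then $$V_k(n) \;=\; \sum_{i=0}^{r-1} Q_{rk}(n+ik) \;=\; Q_{rk}(n)+Q_{rk}(n+k)+\cdots+Q_{rk}(n+(r-1)k).$$
   Context: A partition of a positive integer $m$ is a non-increasing sequence of positive integers (its parts) summing to $m$. For positive integers $j,m$, $Q_j(m)$ denotes the total number of occurrences of the part $j$ among all partitions of $m$ (a partition in which $j$ appears $t$ times contributes $t$). $V_k(m)$ denotes the sum, over all partitions of $m$, of the number of distinct part sizes that occur $k$ or more times in that partition. *)

theory Defs
  imports Main "HOL-Library.Multiset"
begin

text \<open>A partition of m is represented as a multiset of positive integers (its parts)
  whose sum is m; the multiplicity of a part j is count p j.\<close>

definition partitions :: "nat \<Rightarrow> nat multiset set" where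
  "partitions m = {p. (\<forall>x\<in>#p. 0 < x) \<and> sum_mset p = m}"

definition Q :: "nat \<Rightarrow> nat \<Rightarrow> nat" where
  "Q j m = (\<Sum>p\<in>partitions m. count p j)"

definition V :: "nat \<Rightarrow> nat \<Rightarrow> nat" where
  "V k m = (\<Sum>p\<in>partitions m. card {j \<in> set_mset p. k \<le> count p j})"

end

theory Submission
  imports Defs
begin

text \<open>Removing \<open>t\<close> copies of a part \<open>j\<close> identifies the partitions of \<open>m\<close> in which \<open>j\<close> occurs
  at least \<open>t\<close> times with the partitions of \<open>m - t j\<close>. Counting occurrences layer by layer therefore
  gives \<open>Q j m = \<Sum>t\<ge>1. p (m - t j)\<close> and \<open>V k m = \<Sum>j\<ge>1. p (m - j k)\<close>, where \<open>p\<close> counts partitions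
  and vanishes on negative arguments. Hence \<open>Q (r k) (n + i k) = \<Sum>t\<ge>1. p (n - (t r - i) k)\<close>, and as
  \<open>i\<close> runs over \<open>0, \<dots>, r - 1\<close> and \<open>t\<close> over the positive integers, \<open>t r - i\<close> runs over every
  positive integer exactly once.\<close>

lemma part_le_partition_sum:
  assumes "p \<in> partitions m" "x \<in># p"
  shows "x \<le> m"
  using assms sum_mset.remove[OF assms(2)] by (simp add: partitions_def)

lemma size_le_partition_sum:
  assumes "p \<in> partitions m"
  shows "size p \<le> m"
proof -
  have "size p = (\<Sum>a\<in>#p. 1)" by (rule size_eq_sum_mset)
  also have "\<dots> \<le> (\<Sum>a\<in>#p. a)"
    using assms unfolding partitions_def by (intro sum_mset_mono) (auto simp: Suc_leI)
  finally show ?thesis using assms by (simp add: partitions_def)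
qed

lemma finite_partitions: "finite (partitions m)"
proof (rule finite_subset)
  show "partitions m \<subseteq> (\<Union>s\<in>{0..m}. multisets_of_size {1..m} s)"
  proof
    fix p assume p: "p \<in> partitions m"
    have "set_mset p \<subseteq> {1..m}"
      using p part_le_partition_sum[OF p] by (auto simp: partitions_def Suc_leI)
    then show "p \<in> (\<Union>s\<in>{0..m}. multisets_of_size {1..m} s)"
      using size_le_partition_sum[OF p] by (auto simp: multisets_of_size_def)
  qed
qed auto

lemma count_mult_le_partition_sum:
  assumes "p \<in> partitions m"
  shows "count p j * j \<le> m"
proof -
  have "replicate_mset (count p j) j \<subseteq># p" by (simp add: subseteq_mset_def)
  then have "sum_mset (replicate_mset (count p j) j) \<le> sum_mset p"
    by (metis le_add1 subset_mset.le_iff_add sum_mset.union)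
  then show ?thesis using assms by (simp add: partitions_def)
qed

text \<open>The number \<open>p (m - d)\<close> of partitions of \<open>m - d\<close>, taken to be \<open>0\<close> when \<open>d > m\<close> (truncated
  subtraction would give \<open>p 0 = 1\<close>).\<close>

definition npartitions_sub :: "nat \<Rightarrow> nat \<Rightarrow> nat" where
  "npartitions_sub m d = (if d \<le> m then card (partitions (m - d)) else 0)"

lemma npartitions_sub_shift:
  assumes "i \<le> s"
  shows "npartitions_sub (m + i * k) (s * k) = npartitions_sub m ((s - i) * k)"
proof -
  have "s * k = (s - i) * k + i * k" using assms by (simp add: diff_mult_distrib)
  then show ?thesis by (simp add: npartitions_sub_def)
qed

lemma card_partitions_count_ge:
  assumes "0 < j"
  shows "card {p \<in> partitions m. t \<le> count p j} = npartitions_sub m (t * j)"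
proof (cases "t * j \<le> m")
  case False
  have "t * j \<le> m" if "p \<in> partitions m" "t \<le> count p j" for p
  proof -
    have "t * j \<le> count p j * j" using that(2) by (rule mult_le_mono1)
    then show ?thesis using count_mult_le_partition_sum[OF that(1), of j] by linarith
  qed
  then have empty: "{p \<in> partitions m. t \<le> count p j} = {}"
    using False by blast
  show ?thesis unfolding empty using False by (simp add: npartitions_sub_def)
next
  case True
  let ?R = "replicate_mset t j"
  have "bij_betw (\<lambda>q. q + ?R) (partitions (m - t * j)) {p \<in> partitions m. t \<le> count p j}"
  proof (rule bij_betw_byWitness[where f' = "\<lambda>p. p - ?R"])
    show "\<forall>q\<in>partitions (m - t * j). q + ?R - ?R = q" by simp
    show "\<forall>p\<in>{p \<in> partitions m. t \<le> count p j}. p - ?R + ?R = p"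
      by (auto simp: subset_mset.diff_add subseteq_mset_def)
    show "(\<lambda>q. q + ?R) ` partitions (m - t * j) \<subseteq> {p \<in> partitions m. t \<le> count p j}"
      using True assms by (auto simp: partitions_def split: if_splits)
    show "(\<lambda>p. p - ?R) ` {p \<in> partitions m. t \<le> count p j} \<subseteq> partitions (m - t * j)"
    proof clarify
      fix p assume p: "p \<in> partitions m" "t \<le> count p j"
      then have "p - ?R + ?R = p" by (simp add: subset_mset.diff_add subseteq_mset_def)
      have "sum_mset (p - ?R) + t * j = sum_mset (p - ?R + ?R)" by simp
      also have "\<dots> = m" using \<open>p - ?R + ?R = p\<close> p(1) by (simp add: partitions_def)
      finally have "sum_mset (p - ?R) + t * j = m" .
      moreover have "\<forall>x\<in>#p - ?R. 0 < x"
        using p(1) by (auto simp: partitions_def dest: in_diffD)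
      ultimately show "p - ?R \<in> partitions (m - t * j)"
        by (simp add: partitions_def)
    qed
  qed
  then show ?thesis using True by (simp add: bij_betw_same_card npartitions_sub_def)
qed

lemma sum_card_filter_swap:
  assumes "finite A" "finite B"
  shows "(\<Sum>a\<in>A. card {b \<in> B. P a b}) = (\<Sum>b\<in>B. card {a \<in> A. P a b})"
proof -
  have "(\<Sum>a\<in>A. card {b \<in> B. P a b}) = (\<Sum>a\<in>A. \<Sum>b\<in>B. if P a b then 1 else 0)"
    using assms by (simp add: sum.inter_filter[symmetric])
  also have "\<dots> = (\<Sum>b\<in>B. \<Sum>a\<in>A. if P a b then 1 else 0)"
    by (rule sum.swap)
  also have "\<dots> = (\<Sum>b\<in>B. card {a \<in> A. P a b})"
    using assms by (simp add: sum.inter_filter[symmetric])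
  finally show ?thesis .
qed

lemma Q_eq_sum_npartitions_sub:
  assumes "0 < j" "m \<le> N"
  shows "Q j m = (\<Sum>t\<in>{1..N}. npartitions_sub m (t * j))"
proof -
  have "count p j = card {t \<in> {1..N}. t \<le> count p j}" if "p \<in> partitions m" for p
  proof -
    have "count p j \<le> count p j * j" using assms(1) by simp
    also have "\<dots> \<le> N" using count_mult_le_partition_sum[OF that, of j] assms(2) by linarith
    finally have "count p j \<le> N" .
    then have "{t \<in> {1..N}. t \<le> count p j} = {1..count p j}" by auto
    then show ?thesis by simp
  qed
  then have "Q j m = (\<Sum>p\<in>partitions m. card {t \<in> {1..N}. t \<le> count p j})"
    by (simp add: Q_def)
  also have "\<dots> = (\<Sum>t\<in>{1..N}. card {p \<in> partitions m. t \<le> count p j})"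
    by (rule sum_card_filter_swap[OF finite_partitions finite_atLeastAtMost])
  finally show ?thesis by (simp add: card_partitions_count_ge assms(1))
qed

lemma V_eq_sum_npartitions_sub:
  assumes "0 < k" "m \<le> N"
  shows "V k m = (\<Sum>j\<in>{1..N}. npartitions_sub m (j * k))"
proof -
  have "{j \<in> set_mset p. k \<le> count p j} = {j \<in> {1..N}. k \<le> count p j}"
    if p: "p \<in> partitions m" for p
  proof -
    have "j \<in> set_mset p \<longleftrightarrow> j \<in> {1..N}" if "k \<le> count p j" for j
    proof -
      have "0 < count p j" using that assms(1) by linarith
      then have "j \<in># p" by simp
      moreover have "j \<in> {1..N}" if "j \<in># p"
      proof -
        have "0 < j" using p that by (simp add: partitions_def)
        moreover have "j \<le> m" using part_le_partition_sum[OF p that] .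
        ultimately show ?thesis using assms(2) by simp
      qed
      ultimately show ?thesis by simp
    qed
    then show ?thesis by blast
  qed
  then have "V k m = (\<Sum>p\<in>partitions m. card {j \<in> {1..N}. k \<le> count p j})"
    by (simp add: V_def)
  also have "\<dots> = (\<Sum>j\<in>{1..N}. card {p \<in> partitions m. k \<le> count p j})"
    by (rule sum_card_filter_swap[OF finite_partitions finite_atLeastAtMost])
  finally show ?thesis by (simp add: card_partitions_count_ge mult.commute)
qed

text \<open>The inverse reads off \<open>t - 1\<close> and \<open>r - 1 - i\<close> as quotient and remainder of
  \<open>s - 1 = (t - 1) r + (r - 1 - i)\<close> modulo \<open>r\<close>.\<close>

lemma bij_betw_mult_minus:
  fixes r N :: nat
  shows "bij_betw (\<lambda>(i, t). t * r - i) ({..<r} \<times> {1..N}) {1..N * r}"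
proof (rule bij_betw_byWitness[where f' = "\<lambda>s. (r - 1 - (s - 1) mod r, (s - 1) div r + 1)"])
  have div_mod: "(t * r - i - 1) div r = t - 1" "(t * r - i - 1) mod r = r - 1 - i"
    if i: "i < r" and t: "1 \<le> t" for i t
  proof -
    obtain u where u: "t = Suc u" using t by (cases t) auto
    have eq: "t * r - i - 1 = (r - 1 - i) + u * r" using i by (simp add: u)
    have dm: "(a + u * r) div r = u" "(a + u * r) mod r = a" if "a < r" for a
      using that by simp_all
    have "r - 1 - i < r" using i by linarith
    then show "(t * r - i - 1) div r = t - 1" "(t * r - i - 1) mod r = r - 1 - i"
      unfolding eq by (simp_all only: u diff_Suc_1 dm)
  qed
  show "\<forall>x\<in>{..<r} \<times> {1..N}. (\<lambda>s. (r - 1 - (s - 1) mod r, (s - 1) div r + 1)) ((\<lambda>(i, t). t * r - i) x) = x"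
    using div_mod by auto
  have "t * r - i \<in> {1..N * r}" if "i < r" "t \<in> {1..N}" for i t
  proof -
    have "r \<le> t * r" "t * r \<le> N * r" using that(2) by simp_all
    then have "1 \<le> t * r - i" "t * r - i \<le> N * r" using that(1) by linarith+
    then show ?thesis by simp
  qed
  then show "(\<lambda>(i, t). t * r - i) ` ({..<r} \<times> {1..N}) \<subseteq> {1..N * r}" by auto
  show "\<forall>s\<in>{1..N * r}. (\<lambda>(i, t). t * r - i) (r - 1 - (s - 1) mod r, (s - 1) div r + 1) = s"
  proof
    fix s assume s: "s \<in> {1..N * r}"
    then have "0 < r" by (cases r) auto
    then have "(s - 1) mod r < r" by simp
    moreover have "(s - 1) div r * r + (s - 1) mod r = s - 1" by simp
    ultimately show "(\<lambda>(i, t). t * r - i) (r - 1 - (s - 1) mod r, (s - 1) div r + 1) = s"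
      using s by (simp add: algebra_simps)
  qed
  have "(r - 1 - (s - 1) mod r, (s - 1) div r + 1) \<in> {..<r} \<times> {1..N}"
    if "s \<in> {1..N * r}" for s
  proof -
    have "0 < r" using that by (cases r) auto
    moreover have "s - 1 < N * r" using that unfolding atLeastAtMost_iff by linarith
    then have "(s - 1) div r < N" by (rule less_mult_imp_div_less)
    ultimately show ?thesis by simp
  qed
  then show "(\<lambda>s. (r - 1 - (s - 1) mod r, (s - 1) div r + 1)) ` {1..N * r} \<subseteq> {..<r} \<times> {1..N}"
    by (rule image_subsetI)
qed

theorem theorem2:
  fixes n k r :: nat
  assumes "0 < n" and "0 < k" and "0 < r"
  shows "V k n = (\<Sum>i<r. Q (r * k) (n + i * k))"
proof -
  define N where "N = n + r * k"
  have shift: "npartitions_sub (n + i * k) (t * (r * k)) = npartitions_sub n ((t * r - i) * k)"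
    if "i < r" "1 \<le> t" for i t
  proof -
    have "r \<le> t * r" using that(2) by simp
    then have "i \<le> t * r" using that(1) by linarith
    then show ?thesis by (simp add: npartitions_sub_shift mult.assoc[symmetric])
  qed
  have "(\<Sum>i<r. Q (r * k) (n + i * k)) = (\<Sum>i<r. \<Sum>t\<in>{1..N}. npartitions_sub (n + i * k) (t * (r * k)))"
    using assms by (intro sum.cong refl Q_eq_sum_npartitions_sub) (auto simp: N_def)
  also have "\<dots> = (\<Sum>(i, t)\<in>{..<r} \<times> {1..N}. npartitions_sub n ((t * r - i) * k))"
    by (simp add: sum.cartesian_product shift)
  also have "\<dots> = (\<Sum>s\<in>{1..N * r}. npartitions_sub n (s * k))"
    using sum.reindex_bij_betw[OF bij_betw_mult_minus, of "\<lambda>s. npartitions_sub n (s * k)"]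
    by (simp add: case_prod_beta')
  also have "\<dots> = V k n"
  proof -
    have "n \<le> N" by (simp add: N_def)
    also have "\<dots> \<le> N * r" using assms(3) by simp
    finally have "n \<le> N * r" .
    then show ?thesis by (rule V_eq_sum_npartitions_sub[OF assms(2), symmetric])
  qed
  finally show ?thesis ..
qed

end
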